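(* Let $G=(V,E)$ be a connected finite simple graph that is bijective, i.e. $G$ has exactly one cycle and this cycle has odd length; let $A$ be its incidence matrix and $\lambda\in\mathbb{R}_{>0}^n$, and let $\mu$ be the unique solution of $A\mu=\lambda$ (which is the vector of matching rates of the problem $(G,\lambda)$ under any stabilizing policy). Let $k\in E$. (i) If edge $k$ does not belong to the cycle of $G$, then removing $k$ separates $G$ into a tree and a unicyclic graph; letting $V_k\subseteq V$ be the node set of the tree part (which contains one endpoint of $k$), we have $\mu_k=\sum_{i\in V_k}(-1)^{d_{i,k}}\lambda_i$. (ii) If edge $k$ belongs to the cycle of $G$, then $\mu_k=\frac12\sum_{i\in V}(-1)^{d_{i,k}}\lambda_i$. Here $d_{i,k}$ denotes the minimum of the graph distances from node $i$ to the two endpoints of edge $k$.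
   Context: The incidence matrix $A$ of $G$ (with $V=\{1,\dots,n\}$, $E=\{e_1,\dots,e_m\}$) is the $n\times m$ matrix with $a_{i,k}=1$ if node $i$ is an endpoint of $e_k$ and $0$ otherwise; for a bijective graph $m=n$ and $A$ is invertible. The equation $A\mu=\lambda$ reads $\sum_{k\in E_i}\mu_k=\lambda_i$ for every node $i$, where $E_i$ is the set of edges incident to $i$. *)

theory Defs
  imports Complex_Main
begin

definition simple_graph :: "'a set \<Rightarrow> 'a set set \<Rightarrow> bool" where
  "simple_graph V E \<longleftrightarrow> finite V \<and>
     (\<forall>e\<in>E. \<exists>u v. u \<in> V \<and> v \<in> V \<and> u \<noteq> v \<and> e = {u, v})"

definition walk :: "'a set set \<Rightarrow> 'a list \<Rightarrow> bool" where
  "walk E xs \<longleftrightarrow> xs \<noteq> [] \<and> (\<forall>i. i + 1 < length xs \<longrightarrow> {xs ! i, xs ! (i + 1)} \<in> E)"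

definition reachable :: "'a set set \<Rightarrow> 'a \<Rightarrow> 'a \<Rightarrow> bool" where
  "reachable E u v \<longleftrightarrow> (\<exists>xs. walk E xs \<and> hd xs = u \<and> last xs = v)"

definition connected_graph :: "'a set \<Rightarrow> 'a set set \<Rightarrow> bool" where
  "connected_graph V E \<longleftrightarrow> V \<noteq> {} \<and> (\<forall>u\<in>V. \<forall>v\<in>V. reachable E u v)"

definition gdist :: "'a set set \<Rightarrow> 'a \<Rightarrow> 'a \<Rightarrow> nat" where
  "gdist E u v = (LEAST n. \<exists>xs. walk E xs \<and> hd xs = u \<and> last xs = v \<and> length xs = n + 1)"

definition edge_dist :: "'a set set \<Rightarrow> 'a \<Rightarrow> 'a set \<Rightarrow> nat" where
  "edge_dist E i k = Min ((\<lambda>v. gdist E i v) ` k)"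

definition cycle_edges :: "'a list \<Rightarrow> 'a set set" where
  "cycle_edges vs = {{vs ! i, vs ! ((i + 1) mod length vs)} | i. i < length vs}"

definition is_cycle :: "'a set set \<Rightarrow> 'a set set \<Rightarrow> bool" where
  "is_cycle E C \<longleftrightarrow> (\<exists>vs. length vs \<ge> 3 \<and> distinct vs \<and> C = cycle_edges vs \<and> C \<subseteq> E)"

definition bijective_graph :: "'a set \<Rightarrow> 'a set set \<Rightarrow> bool" where
  "bijective_graph V E \<longleftrightarrow> simple_graph V E \<and> connected_graph V E \<and>
     (\<exists>C. is_cycle E C \<and> odd (card C) \<and> (\<forall>C'. is_cycle E C' \<longrightarrow> C' = C))"

definition is_component :: "'a set \<Rightarrow> 'a set set \<Rightarrow> 'a set \<Rightarrow> bool" where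
  "is_component V E' C \<longleftrightarrow> (\<exists>x\<in>V. C = {v \<in> V. reachable E' x v})"

definition acyclic_on :: "'a set set \<Rightarrow> 'a set \<Rightarrow> bool" where
  "acyclic_on E' C \<longleftrightarrow> \<not> (\<exists>Cy. is_cycle {e \<in> E'. e \<subseteq> C} Cy)"

end

theory Submission
  imports Defs
begin

(* Write k = {a, b} and s i = (-1) ^ d i, where d i is the distance from i to the nearer
   endpoint of k.  Multiplying the equations A mu = lam by s and summing them over a vertex
   set R that is closed under the edges other than k turns the left-hand side into a sum over
   edges, in which e contributes mu e times the sum of s over the endpoints of e in R.
   If R contains no cycle avoiding k and G has no even cycle, the two endpoints of every edge
   e other than k that meets R lie on different levels of d, so their signs cancel and only k
   survives, with coefficient card (R \<inter> k).  For k on the odd cycle take R = V (coefficient 2); for a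
   bridge k take R the component of G - k that contains no cycle (coefficient 1). *)

section \<open>Walks and graph distance\<close>

lemma walk_singleton [simp]: "walk E [x]"
  by (simp add: walk_def)

lemma walk_not_Nil: "walk E xs \<Longrightarrow> xs \<noteq> []"
  by (simp add: walk_def)

lemma walk_Cons_Cons [simp]: "walk E (x # y # xs) \<longleftrightarrow> {x, y} \<in> E \<and> walk E (y # xs)"
  unfolding walk_def
proof safe
  fix i assume "\<forall>i. i + 1 < length (x # y # xs) \<longrightarrow> {(x # y # xs) ! i, (x # y # xs) ! (i + 1)} \<in> E"
    and "i + 1 < length (y # xs)"
  then show "{(y # xs) ! i, (y # xs) ! (i + 1)} \<in> E"
    by (metis Suc_eq_plus1 Suc_less_eq length_Cons nth_Cons_Suc)
next
  assume "\<forall>i. i + 1 < length (x # y # xs) \<longrightarrow> {(x # y # xs) ! i, (x # y # xs) ! (i + 1)} \<in> E"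
  then show "{x, y} \<in> E" by fastforce
next
  fix i assume "{x, y} \<in> E" and "\<forall>i. i + 1 < length (y # xs) \<longrightarrow> {(y # xs) ! i, (y # xs) ! (i + 1)} \<in> E"
    and "i + 1 < length (x # y # xs)"
  then show "{(x # y # xs) ! i, (x # y # xs) ! (i + 1)} \<in> E" by (cases i) auto
qed

lemma walk_append:
  "xs \<noteq> [] \<Longrightarrow> ys \<noteq> [] \<Longrightarrow>
    walk E (xs @ ys) \<longleftrightarrow> walk E xs \<and> walk E ys \<and> {last xs, hd ys} \<in> E"
  by (induction xs rule: induct_list012) (auto simp: neq_Nil_conv)

lemma walk_mono: "walk E xs \<Longrightarrow> E \<subseteq> E' \<Longrightarrow> walk E' xs"
  unfolding walk_def by blast

lemma walk_drop: "walk E xs \<Longrightarrow> n < length xs \<Longrightarrow> walk E (drop n xs)"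
  unfolding walk_def by auto

lemma walk_take: "walk E xs \<Longrightarrow> 0 < n \<Longrightarrow> walk E (take n xs)"
  unfolding walk_def by auto

lemma walk_rev: "walk E xs \<Longrightarrow> walk E (rev xs)"
proof (induction xs rule: induct_list012)
  case (3 x y zs)
  then have "walk E (rev (y # zs))" and "{y, x} \<in> E" by (auto simp: insert_commute)
  then show ?case using walk_append[of "rev (y # zs)" "[x]" E] by (simp add: last_rev)
qed simp_all

lemma walk_to_path:
  "walk E xs \<Longrightarrow> \<exists>ys. walk E ys \<and> distinct ys \<and> hd ys = hd xs \<and> last ys = last xs"
proof (induction xs rule: induct_list012)
  case (3 x y zs)
  then obtain p where p: "walk E p" "distinct p" "hd p = y" "last p = last (y # zs)" by auto
  have "p \<noteq> []" using p(1) walk_not_Nil by blast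
  show ?case
  proof (cases "x \<in> set p")
    case True
    then obtain p1 p2 where "p = p1 @ x # p2" by (meson split_list)
    then show ?thesis using p walk_drop[OF p(1), of "length p1"]
      by (intro exI[of _ "x # p2"]) auto
  next
    case False
    have "walk E (x # p)" using p \<open>p \<noteq> []\<close> 3(3) by (cases p) auto
    then show ?thesis using False p \<open>p \<noteq> []\<close> by (intro exI[of _ "x # p"]) auto
  qed
qed (auto intro: exI[of _ "[_]"])

lemma reachable_refl: "reachable E x x"
  unfolding reachable_def by (intro exI[of _ "[x]"]) simp

lemma reachable_sym: "reachable E x y \<Longrightarrow> reachable E y x"
  unfolding reachable_def by (metis hd_rev last_rev walk_rev)

lemma reachable_trans:
  assumes "reachable E x y" and "reachable E y z"
  shows "reachable E x z"
proof -
  obtain xs where xs: "walk E xs" "hd xs = x" "last xs = y"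
    using assms(1) unfolding reachable_def by blast
  obtain ys where ys: "walk E (y # ys)" "last (y # ys) = z"
    using assms(2) walk_not_Nil unfolding reachable_def by (metis list.collapse)
  show ?thesis
  proof (cases "ys = []")
    case True
    then show ?thesis using xs ys unfolding reachable_def by auto
  next
    case False
    then have "walk E (xs @ ys)"
      using walk_append[of xs ys E] xs ys walk_not_Nil by (cases ys) auto
    then show ?thesis using xs ys False walk_not_Nil unfolding reachable_def
      by (metis hd_append last_ConsR last_appendR)
  qed
qed

lemma reachable_step: "reachable E x y \<Longrightarrow> {y, z} \<in> E \<Longrightarrow> reachable E x z"
  using reachable_trans[of E x y z] unfolding reachable_def
  by (metis walk_Cons_Cons walk_singleton last_ConsL last_ConsR list.discI list.sel(1))

lemma reachable_walk_member: "walk E xs \<Longrightarrow> y \<in> set xs \<Longrightarrow> reachable E (hd xs) y"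
proof -
  assume w: "walk E xs" and "y \<in> set xs"
  then obtain i where i: "i < length xs" "xs ! i = y" by (meson in_set_conv_nth)
  have "walk E (take (Suc i) xs)" using walk_take[OF w] by simp
  moreover have "hd (take (Suc i) xs) = hd xs" using i by (cases xs) auto
  moreover have "last (take (Suc i) xs) = y" using i by (simp add: take_Suc_conv_app_nth)
  ultimately show ?thesis unfolding reachable_def by blast
qed

lemma gdist_witness:
  assumes "reachable E u v"
  obtains xs where "walk E xs" "hd xs = u" "last xs = v" "length xs = gdist E u v + 1"
proof -
  obtain xs where xs: "walk E xs" "hd xs = u" "last xs = v"
    using assms unfolding reachable_def by blast
  then have "\<exists>n xs. walk E xs \<and> hd xs = u \<and> last xs = v \<and> length xs = n + 1"
    using walk_not_Nil[OF xs(1)] by (intro exI[of _ "length xs - 1"] exI[of _ xs]) auto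
  from LeastI_ex[OF this] show ?thesis using that unfolding gdist_def by blast
qed

lemma gdist_le_walk:
  assumes "walk E xs" "hd xs = u" "last xs = v"
  shows "gdist E u v \<le> length xs - 1"
  unfolding gdist_def using assms walk_not_Nil by (intro Least_le) fastforce

lemma gdist_self [simp]: "gdist E u u = 0"
  using gdist_le_walk[of E "[u]" u u] by simp

lemma gdist_eq_0:
  assumes "reachable E u v" "gdist E u v = 0"
  shows "u = v"
proof -
  obtain xs where "walk E xs" "hd xs = u" "last xs = v" "length xs = 1"
    using gdist_witness[OF assms(1)] assms(2) by auto
  then show ?thesis by (cases xs) auto
qed

lemma gdist_neighbor_le:
  assumes "{u, v} \<in> E" "reachable E u t"
  shows "gdist E v t \<le> gdist E u t + 1"
proof -
  obtain xs where xs: "walk E xs" "hd xs = u" "last xs = t" "length xs = gdist E u t + 1"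
    using gdist_witness[OF assms(2)] by blast
  then obtain rest where "xs = u # rest" using walk_not_Nil by (cases xs) auto
  then have "walk E (v # xs)" "last (v # xs) = t"
    using assms(1) xs by (simp_all add: insert_commute)
  then show ?thesis using gdist_le_walk[of E "v # xs" v t] xs(4) by simp
qed

lemma gdist_Suc_neighbor:
  assumes "reachable E u t" "gdist E u t = Suc n"
  obtains w where "{u, w} \<in> E" "gdist E w t = n" "reachable E w t"
proof -
  obtain xs where xs: "walk E xs" "hd xs = u" "last xs = t" "length xs = Suc n + 1"
    using gdist_witness[OF assms(1)] assms(2) by metis
  then obtain w rest where xs_eq: "xs = u # w # rest"
    by (cases xs; cases "tl xs") auto
  have uw: "{u, w} \<in> E" and w: "walk E (w # rest)" "last (w # rest) = t"
    using xs xs_eq by auto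
  then have "reachable E w t" unfolding reachable_def by (metis list.sel(1))
  moreover have "gdist E w t \<le> n" using gdist_le_walk[OF w(1) _ w(2)] xs(4) xs_eq by simp
  moreover have "Suc n \<le> gdist E w t + 1"
    using gdist_neighbor_le[of w u E t] uw calculation(1) assms(2) by (simp add: insert_commute)
  ultimately show ?thesis using that uw by simp
qed

section \<open>Cycles\<close>

lemma cycle_edgesI: "i < length vs \<Longrightarrow> {vs ! i, vs ! ((i + 1) mod length vs)} \<in> cycle_edges vs"
  unfolding cycle_edges_def by blast

lemma last_hd_in_cycle_edges: "vs \<noteq> [] \<Longrightarrow> {last vs, hd vs} \<in> cycle_edges vs"
  using cycle_edgesI[of "length vs - 1" vs] by (simp add: last_conv_nth hd_conv_nth)

lemma cycle_edges_cases:
  assumes "e \<in> cycle_edges vs"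
  shows "(\<exists>i. i + 1 < length vs \<and> e = {vs ! i, vs ! (i + 1)}) \<or> e = {last vs, hd vs}"
proof -
  obtain i where i: "i < length vs" "e = {vs ! i, vs ! ((i + 1) mod length vs)}"
    using assms unfolding cycle_edges_def by blast
  show ?thesis
  proof (cases "i + 1 < length vs")
    case False
    then have "length vs = i + 1" "vs \<noteq> []" using i(1) by auto
    then have "last vs = vs ! i" "hd vs = vs ! 0" "(i + 1) mod length vs = 0"
      by (auto simp: last_conv_nth hd_conv_nth)
    then show ?thesis using i by simp
  qed (use i in auto)
qed

lemma cycle_edges_subset_closed_walk:
  "walk E vs \<Longrightarrow> {last vs, hd vs} \<in> E \<Longrightarrow> cycle_edges vs \<subseteq> E"
  using cycle_edges_cases unfolding walk_def by blast

lemma walk_if_cycle_edges_subset: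
  assumes "cycle_edges vs \<subseteq> E" "vs \<noteq> []"
  shows "walk E vs"
  unfolding walk_def
proof (intro conjI allI impI)
  fix i assume "i + 1 < length vs"
  then show "{vs ! i, vs ! (i + 1)} \<in> E" using cycle_edgesI[of i vs] assms(1) by auto
qed (rule assms(2))

lemma cycle_edge_subset_set: "e \<in> cycle_edges vs \<Longrightarrow> e \<subseteq> set vs"
proof -
  assume "e \<in> cycle_edges vs"
  then obtain i where "i < length vs" "e = {vs ! i, vs ! ((i + 1) mod length vs)}"
    unfolding cycle_edges_def by blast
  moreover from this have "(i + 1) mod length vs < length vs" by (intro mod_less_divisor) linarith
  ultimately show ?thesis by auto
qed

lemma Suc_mod_not_mutual:
  assumes "3 \<le> n" "j < n" "i = Suc j mod n" "j = Suc i mod n"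
  shows False
proof (cases "Suc j < n")
  case True
  then have "i = Suc j" using assms(3) by simp
  then have jj: "Suc (Suc j) mod n = j" using assms(4) by metis
  show False
  proof (cases "Suc (Suc j) < n")
    case False
    then have "n = Suc (Suc j)" using True by simp
    then show False using jj assms(1) by simp
  qed (use jj in simp)
next
  case False
  then have "n = Suc j" using assms(2) by simp
  then have "i = 0" using assms(3) by simp
  then have "Suc 0 mod n = j" using assms(4) by metis
  then show False using \<open>n = Suc j\<close> assms(1) by simp
qed

lemma card_cycle_edges:
  assumes "distinct vs" "3 \<le> length vs"
  shows "card (cycle_edges vs) = length vs"
proof -
  define n where "n = length vs"
  have "0 < n" using assms(2) n_def by linarith
  define f where "f i = {vs ! i, vs ! (Suc i mod n)}" for i
  have edges_eq: "cycle_edges vs = f ` {..<n}"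
    unfolding cycle_edges_def f_def n_def by auto
  have "inj_on f {..<n}"
  proof (rule inj_onI)
    fix i j assume "i \<in> {..<n}" "j \<in> {..<n}" "f i = f j"
    then have ij: "i < n" "j < n"
      and "vs ! i = vs ! j \<and> vs ! (Suc i mod n) = vs ! (Suc j mod n) \<or>
        vs ! i = vs ! (Suc j mod n) \<and> vs ! (Suc i mod n) = vs ! j"
      by (auto simp: f_def doubleton_eq_iff)
    moreover have "Suc i mod n < n" "Suc j mod n < n"
      using \<open>0 < n\<close> by simp_all
    moreover have index_eq: "vs ! p = vs ! q \<Longrightarrow> p < n \<Longrightarrow> q < n \<Longrightarrow> p = q" for p q
      using assms(1) n_def by (simp add: nth_eq_iff_index_eq)
    ultimately consider "i = j" | "i = Suc j mod n" "Suc i mod n = j" by blast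
    then show "i = j"
    proof cases
      case 2
      then show ?thesis using Suc_mod_not_mutual[of n j i] assms(2) n_def ij by metis
    qed
  qed
  then show ?thesis using edges_eq n_def by (simp add: card_image)
qed

lemma is_cycle_mono: "is_cycle E' C \<Longrightarrow> E' \<subseteq> E \<Longrightarrow> is_cycle E C"
  unfolding is_cycle_def by blast

lemma distinct_hd_neq_last: "distinct xs \<Longrightarrow> 2 \<le> length xs \<Longrightarrow> hd xs \<noteq> last xs"
  by (cases xs) (auto simp: last_conv_nth hd_conv_nth nth_eq_iff_index_eq)

lemma closed_path_is_cycle:
  assumes "walk (E - {k}) ys" "distinct ys" "2 \<le> length ys" "k = {hd ys, last ys}" "k \<in> E"
  shows "is_cycle E (cycle_edges ys)" "k \<in> cycle_edges ys" "card (cycle_edges ys) = length ys"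
proof -
  have "length ys \<noteq> 2"
  proof
    assume "length ys = 2"
    then obtain p q where "ys = [p, q]"
      by (metis One_nat_def Suc_1 length_0_conv length_Suc_conv)
    then show False using assms(1,4) by simp
  qed
  then have long: "3 \<le> length ys" using assms(3) by simp
  have closing: "{last ys, hd ys} = k" using assms(4) by blast
  then have "cycle_edges ys \<subseteq> E"
    using walk_mono[OF assms(1)] assms(5) cycle_edges_subset_closed_walk by blast
  then show "is_cycle E (cycle_edges ys)" using long assms(2) unfolding is_cycle_def by blast
  show "k \<in> cycle_edges ys"
    using last_hd_in_cycle_edges[of ys] closing walk_not_Nil[OF assms(1)] by simp
  show "card (cycle_edges ys) = length ys" using card_cycle_edges long assms(2) by blast
qed

lemma not_acyclic_onI:
  assumes "3 \<le> length vs" "distinct vs" "cycle_edges vs \<subseteq> E" "set vs \<subseteq> R"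
  shows "\<not> acyclic_on E R"
proof -
  have "cycle_edges vs \<subseteq> {e \<in> E. e \<subseteq> R}" using assms(3,4) cycle_edge_subset_set by blast
  then show ?thesis using assms(1,2) unfolding acyclic_on_def is_cycle_def by blast
qed

definition component_of :: "'a set \<Rightarrow> 'a set set \<Rightarrow> 'a \<Rightarrow> 'a set" where
  "component_of V E x = {v \<in> V. reachable E x v}"

lemma is_component_iff: "is_component V E C \<longleftrightarrow> (\<exists>x\<in>V. C = component_of V E x)"
  by (simp add: is_component_def component_of_def)

lemma component_of_subset: "component_of V E x \<subseteq> V"
  by (simp add: component_of_def)

lemma component_of_self: "x \<in> V \<Longrightarrow> x \<in> component_of V E x"
  by (simp add: component_of_def reachable_refl)

lemma component_of_eq: "y \<in> component_of V E x \<Longrightarrow> component_of V E y = component_of V E x"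
  unfolding component_of_def by (blast intro: reachable_trans reachable_sym)

lemma component_of_closed:
  "y \<in> component_of V E x \<Longrightarrow> {y, w} \<in> E \<Longrightarrow> w \<in> V \<Longrightarrow> w \<in> component_of V E x"
  unfolding component_of_def by (blast intro: reachable_step)

section \<open>Alternating sums over the levels of an edge\<close>

lemma sum_vertices_eq_sum_edges:
  fixes w lam :: "'a \<Rightarrow> 'r::comm_semiring_0" and mu :: "'a set \<Rightarrow> 'r"
  assumes "finite S" "finite E" "\<forall>i\<in>S. (\<Sum>e\<in>{e \<in> E. i \<in> e}. mu e) = lam i"
  shows "(\<Sum>i\<in>S. w i * lam i) = (\<Sum>e\<in>E. mu e * (\<Sum>i\<in>{i \<in> S. i \<in> e}. w i))"
proof -
  have "(\<Sum>i\<in>S. w i * lam i) = (\<Sum>i\<in>S. \<Sum>e\<in>{e \<in> E. i \<in> e}. w i * mu e)"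
    using assms(3) by (simp add: sum_distrib_left[symmetric])
  also have "\<dots> = (\<Sum>e\<in>E. \<Sum>i\<in>{i \<in> S. i \<in> e}. w i * mu e)"
    by (rule sum.swap_restrict[OF assms(1,2)])
  also have "\<dots> = (\<Sum>e\<in>E. mu e * (\<Sum>i\<in>{i \<in> S. i \<in> e}. w i))"
    by (simp add: sum_distrib_left mult.commute)
  finally show ?thesis .
qed

locale connected_graph_edge =
  fixes V :: "'a set" and E :: "'a set set" and a b :: 'a
  assumes simple: "simple_graph V E" and connected: "connected_graph V E"
    and edge_ab: "{a, b} \<in> E"
begin

abbreviation level :: "'a \<Rightarrow> nat" where
  "level i \<equiv> edge_dist E i {a, b}"

lemma edge_endpoints: "e \<in> E \<Longrightarrow> \<exists>u v. u \<in> V \<and> v \<in> V \<and> u \<noteq> v \<and> e = {u, v}"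
  using simple unfolding simple_graph_def by blast

lemma edge_vertices: "{u, v} \<in> E \<Longrightarrow> u \<in> V \<and> v \<in> V \<and> u \<noteq> v"
  using edge_endpoints by (fastforce simp: doubleton_eq_iff)

lemma finite_V: "finite V"
  using simple unfolding simple_graph_def by blast

lemma finite_E: "finite E"
proof -
  have "E \<subseteq> Pow V" using edge_endpoints by blast
  then show ?thesis using finite_V by (meson finite_Pow_iff finite_subset)
qed

lemma reachable_in_V: "u \<in> V \<Longrightarrow> v \<in> V \<Longrightarrow> reachable E u v"
  using connected unfolding connected_graph_def by blast

lemma a_in_V: "a \<in> V" and b_in_V: "b \<in> V" and a_neq_b: "a \<noteq> b"
  using edge_vertices[OF edge_ab] by simp_all

lemma level_eq_min: "level i = min (gdist E i a) (gdist E i b)"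
  unfolding edge_dist_def by simp

lemma level_a [simp]: "level a = 0" and level_b [simp]: "level b = 0"
  by (simp_all add: level_eq_min)

lemma level_eq_0: "u \<in> V \<Longrightarrow> level u = 0 \<Longrightarrow> u = a \<or> u = b"
  using gdist_eq_0 reachable_in_V a_in_V b_in_V unfolding level_eq_min by (metis min_def)

lemma level_neighbor_le:
  assumes "{u, v} \<in> E"
  shows "level v \<le> level u + 1"
proof -
  have "u \<in> V" using edge_vertices assms by blast
  then have "gdist E v a \<le> gdist E u a + 1" "gdist E v b \<le> gdist E u b + 1"
    using gdist_neighbor_le[OF assms] reachable_in_V a_in_V b_in_V by blast+
  then show ?thesis unfolding level_eq_min by linarith
qed

lemma level_Suc_neighbor:
  assumes "u \<in> V" "level u = Suc n"
  obtains w where "{u, w} \<in> E" "level w = n"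
proof -
  have "\<exists>w. {u, w} \<in> E \<and> level w \<le> n"
  proof (cases "gdist E u a \<le> gdist E u b")
    case True
    then have "gdist E u a = Suc n" using assms(2) unfolding level_eq_min by simp
    with gdist_Suc_neighbor obtain w where "{u, w} \<in> E" "gdist E w a = n"
      using reachable_in_V[OF assms(1) a_in_V] by metis
    then show ?thesis unfolding level_eq_min by (intro exI[of _ w]) simp
  next
    case False
    then have "gdist E u b = Suc n" using assms(2) unfolding level_eq_min by simp
    with gdist_Suc_neighbor obtain w where "{u, w} \<in> E" "gdist E w b = n"
      using reachable_in_V[OF assms(1) b_in_V] by metis
    then show ?thesis unfolding level_eq_min by (intro exI[of _ w]) simp
  qed
  then obtain w where w: "{u, w} \<in> E" "level w \<le> n" by blast
  then have "level u \<le> level w + 1" using level_neighbor_le[of w u] by (simp add: insert_commute)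
  then show ?thesis using that w assms(2) by simp
qed

lemma level_signs_cancel:
  assumes "{u, v} \<in> E" "level u \<noteq> level v"
  shows "(-1::'r::ring_1) ^ level u + (-1) ^ level v = 0"
proof -
  have "level v \<le> level u + 1" "level u \<le> level v + 1"
    using assms(1) level_neighbor_le[of u v] level_neighbor_le[of v u] by (simp_all add: insert_commute)
  then have "level u = Suc (level v) \<or> level v = Suc (level u)" using assms(2) by linarith
  then show ?thesis by auto
qed

(* Extend the path at both ends by a neighbour one level lower.  Either the two new vertices
   coincide, closing a cycle inside R that avoids {a, b}, or the path reaches level 0, where its
   ends are a and b and the edge {a, b} closes it into a cycle of even length. *)
lemma equal_level_path_cycle:
  assumes R: "R \<subseteq> V" and R_closed: "\<forall>x y. x \<in> R \<longrightarrow> {x, y} \<in> E - {{a, b}} \<longrightarrow> y \<in> R"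
  shows "\<lbrakk>distinct xs; 2 \<le> length xs; even (length xs); walk (E - {{a, b}}) xs; set xs \<subseteq> R;
      level (hd xs) = m; level (last xs) = m; \<forall>y\<in>set xs. m \<le> level y\<rbrakk> \<Longrightarrow>
    (\<exists>C. is_cycle E C \<and> even (card C)) \<or> \<not> acyclic_on (E - {{a, b}}) R"
proof (induction m arbitrary: xs)
  case 0
  then have "xs \<noteq> []" by auto
  then have "hd xs \<in> V" "last xs \<in> V" "hd xs \<noteq> last xs"
    using hd_in_set last_in_set 0(1,2,5) R distinct_hd_neq_last[of xs] by blast+
  then have "{a, b} = {hd xs, last xs}" using level_eq_0 0(6,7) a_neq_b by auto
  then have "is_cycle E (cycle_edges xs)" "card (cycle_edges xs) = length xs"
    using closed_path_is_cycle[OF 0(4,1,2) _ edge_ab] by auto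
  then show ?case using 0(3) by auto
next
  case (Suc m)
  define u v where "u = hd xs" and "v = last xs"
  have "xs \<noteq> []" using Suc.prems(2) by auto
  then have uv: "u \<in> R" "v \<in> R" using Suc.prems(5) u_def v_def by auto
  obtain u' where u': "{u, u'} \<in> E" "level u' = m"
    using level_Suc_neighbor uv R Suc.prems(6) u_def by blast
  obtain v' where v': "{v, v'} \<in> E" "level v' = m"
    using level_Suc_neighbor uv R Suc.prems(7) v_def by blast
  have "level u = Suc m" "level v = Suc m" using Suc.prems(6,7) u_def v_def by simp_all
  then have "u \<notin> {a, b}" "v \<notin> {a, b}" by (metis level_a level_b Zero_not_Suc insertE singletonD)+
  then have u'_edge: "{u', u} \<in> E - {{a, b}}" and v'_edge: "{v, v'} \<in> E - {{a, b}}"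
    using u' v' by (auto simp: doubleton_eq_iff insert_commute)
  then have "u' \<in> R" "v' \<in> R" using R_closed uv by (auto simp: insert_commute)
  have "u' \<notin> set xs" "v' \<notin> set xs" using Suc.prems(8) u' v' by fastforce+
  have walk': "walk (E - {{a, b}}) (u' # xs)"
    using u'_edge Suc.prems(4) u_def \<open>xs \<noteq> []\<close> by (cases xs) auto
  show ?case
  proof (cases "u' = v'")
    case True
    then have "cycle_edges (u' # xs) \<subseteq> E - {{a, b}}"
      using cycle_edges_subset_closed_walk[OF walk'] v'_edge v_def \<open>xs \<noteq> []\<close>
      by (simp add: insert_commute)
    then have "\<not> acyclic_on (E - {{a, b}}) R"
      using not_acyclic_onI[of "u' # xs"] Suc.prems \<open>u' \<notin> set xs\<close> \<open>u' \<in> R\<close> by auto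
    then show ?thesis by blast
  next
    case False
    have "walk (E - {{a, b}}) (u' # xs @ [v'])"
      using walk_append[of "u' # xs" "[v']"] walk' v'_edge v_def \<open>xs \<noteq> []\<close> by simp
    then show ?thesis
      by (rule Suc.IH[rotated 3])
        (use Suc.prems False u' v' \<open>u' \<notin> set xs\<close> \<open>v' \<notin> set xs\<close> \<open>u' \<in> R\<close> \<open>v' \<in> R\<close>
          in \<open>auto simp: Suc_le_eq\<close>)
  qed
qed

lemma levels_differ:
  assumes R: "R \<subseteq> V" and R_closed: "\<forall>x y. x \<in> R \<longrightarrow> {x, y} \<in> E - {{a, b}} \<longrightarrow> y \<in> R"
    and odd_cycles: "\<forall>C. is_cycle E C \<longrightarrow> odd (card C)"
    and acyclic: "acyclic_on (E - {{a, b}}) R"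
    and edge: "{u, v} \<in> E - {{a, b}}" and "u \<in> R"
  shows "level u \<noteq> level v"
proof
  assume "level u = level v"
  moreover have "u \<noteq> v" using edge edge_vertices by blast
  moreover have "v \<in> R" using R_closed edge \<open>u \<in> R\<close> by blast
  ultimately have "(\<exists>C. is_cycle E C \<and> even (card C)) \<or> \<not> acyclic_on (E - {{a, b}}) R"
    using equal_level_path_cycle[OF R R_closed, of "[u, v]" "level u"] edge \<open>u \<in> R\<close> by auto
  then show False using odd_cycles acyclic by blast
qed

lemma signed_sum_closed_region:
  fixes lam :: "'a \<Rightarrow> 'r::comm_ring_1" and mu :: "'a set \<Rightarrow> 'r"
  assumes R: "R \<subseteq> V" and R_closed: "\<forall>x y. x \<in> R \<longrightarrow> {x, y} \<in> E - {{a, b}} \<longrightarrow> y \<in> R"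
    and odd_cycles: "\<forall>C. is_cycle E C \<longrightarrow> odd (card C)"
    and acyclic: "acyclic_on (E - {{a, b}}) R"
    and sol: "\<forall>i\<in>R. (\<Sum>e\<in>{e \<in> E. i \<in> e}. mu e) = lam i"
  shows "(\<Sum>i\<in>R. (-1) ^ level i * lam i) = of_nat (card (R \<inter> {a, b})) * mu {a, b}"
proof -
  have edge_term: "mu e * (\<Sum>i\<in>{i \<in> R. i \<in> e}. (-1) ^ level i) =
      (if e = {a, b} then of_nat (card (R \<inter> {a, b})) * mu {a, b} else 0)" if "e \<in> E" for e
  proof (cases "e = {a, b}")
    case True
    then have "{i \<in> R. i \<in> e} = R \<inter> {a, b}" by blast
    moreover have "(\<Sum>i\<in>R \<inter> {a, b}. (-1::'r) ^ level i) = of_nat (card (R \<inter> {a, b}))"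
      by (subst sum.cong[OF refl, of _ _ "\<lambda>_. 1"]) auto
    ultimately show ?thesis using True by (simp add: mult.commute)
  next
    case False
    obtain u v where uv: "e = {u, v}" "u \<noteq> v" using edge_endpoints[OF \<open>e \<in> E\<close>] by blast
    then have edges: "{u, v} \<in> E - {{a, b}}" "{v, u} \<in> E - {{a, b}}"
      using \<open>e \<in> E\<close> False by (auto simp: insert_commute)
    consider "u \<notin> R" "v \<notin> R" | "u \<in> R" "v \<in> R" using R_closed edges by blast
    then show ?thesis
    proof cases
      case 1
      then have "{i \<in> R. i \<in> e} = {}" using uv by auto
      then show ?thesis using False by (simp only: sum.empty if_False mult_zero_right)
    next
      case 2
      then have "{i \<in> R. i \<in> e} = {u, v}" using uv by auto
      moreover have "(-1::'r) ^ level u + (-1) ^ level v = 0"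
        using level_signs_cancel edges(1)
          levels_differ[OF R R_closed odd_cycles acyclic edges(1) \<open>u \<in> R\<close>] by blast
      ultimately show ?thesis using uv False by simp
    qed
  qed
  have "(\<Sum>i\<in>R. (-1) ^ level i * lam i) = (\<Sum>e\<in>E. mu e * (\<Sum>i\<in>{i \<in> R. i \<in> e}. (-1) ^ level i))"
    using sum_vertices_eq_sum_edges[OF finite_subset[OF R finite_V] finite_E sol] .
  also have "\<dots> = (\<Sum>e\<in>E. if e = {a, b} then of_nat (card (R \<inter> {a, b})) * mu {a, b} else 0)"
    using edge_term by (rule sum.cong[OF refl])
  also have "\<dots> = of_nat (card (R \<inter> {a, b})) * mu {a, b}"
    using edge_ab finite_E by simp
  finally show ?thesis .
qed

lemma mu_of_cycle_edge:
  fixes lam :: "'a \<Rightarrow> real" and mu :: "'a set \<Rightarrow> real"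
  assumes odd_cycles: "\<forall>C. is_cycle E C \<longrightarrow> odd (card C)"
    and acyclic: "acyclic_on (E - {{a, b}}) V"
    and sol: "\<forall>i\<in>V. (\<Sum>e\<in>{e \<in> E. i \<in> e}. mu e) = lam i"
  shows "mu {a, b} = 1 / 2 * (\<Sum>i\<in>V. (-1) ^ level i * lam i)"
proof -
  have "V \<inter> {a, b} = {a, b}" using a_in_V b_in_V by blast
  then have "(\<Sum>i\<in>V. (-1) ^ level i * lam i) = 2 * mu {a, b}"
    using signed_sum_closed_region[OF order_refl _ odd_cycles acyclic sol] edge_vertices a_neq_b
    by auto
  then show ?thesis by simp
qed

section \<open>Bridges\<close>

lemma reachable_avoiding_edge:
  assumes "v \<in> V"
  shows "reachable (E - {{a, b}}) a v \<or> reachable (E - {{a, b}}) b v"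
proof -
  have "reachable (E - {{a, b}}) a (last xs) \<or> reachable (E - {{a, b}}) b (last xs)"
    if "walk E xs" "hd xs \<in> {a, b}" for xs
    using that
  proof (induction xs rule: rev_induct)
    case (snoc x xs)
    show ?case
    proof (cases "xs = []")
      case True
      then show ?thesis using snoc.prems by (auto simp: reachable_refl)
    next
      case False
      then have "walk E xs" "{last xs, x} \<in> E" "hd xs \<in> {a, b}"
        using walk_append[OF False, of "[x]" E] snoc.prems by auto
      then have IH: "reachable (E - {{a, b}}) a (last xs) \<or> reachable (E - {{a, b}}) b (last xs)"
        using snoc.IH by blast
      show ?thesis
      proof (cases "{last xs, x} = {a, b}")
        case True
        then have "x \<in> {a, b}" by blast
        then show ?thesis by (auto simp: reachable_refl)
      next
        case False
        then have "{last xs, x} \<in> E - {{a, b}}" using \<open>{last xs, x} \<in> E\<close> by blast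
        then show ?thesis using IH reachable_step by fastforce
      qed
    qed
  qed (simp add: walk_def)
  then show ?thesis
    using reachable_in_V[OF a_in_V assms] unfolding reachable_def by fastforce
qed

lemma bridge_not_reachable:
  assumes "\<not> (\<exists>C. is_cycle E C \<and> {a, b} \<in> C)"
  shows "\<not> reachable (E - {{a, b}}) a b"
proof
  assume "reachable (E - {{a, b}}) a b"
  then obtain ys where ys: "walk (E - {{a, b}}) ys" "distinct ys" "hd ys = a" "last ys = b"
    using walk_to_path unfolding reachable_def by metis
  then have "2 \<le> length ys"
    using a_neq_b walk_not_Nil[OF ys(1)] by (cases ys) (auto simp: Suc_le_eq)
  then show False using closed_path_is_cycle(1,2)[OF ys(1,2) _ _ edge_ab] ys(3,4) assms by auto
qed

lemma components_remove_edge: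
  shows "V = component_of V (E - {{a, b}}) a \<union> component_of V (E - {{a, b}}) b"
    and "is_component V (E - {{a, b}}) C \<longleftrightarrow>
      C = component_of V (E - {{a, b}}) a \<or> C = component_of V (E - {{a, b}}) b"
proof -
  show cover: "V = component_of V (E - {{a, b}}) a \<union> component_of V (E - {{a, b}}) b"
    using reachable_avoiding_edge unfolding component_of_def by blast
  show "is_component V (E - {{a, b}}) C \<longleftrightarrow>
      C = component_of V (E - {{a, b}}) a \<or> C = component_of V (E - {{a, b}}) b"
  proof
    assume "is_component V (E - {{a, b}}) C"
    then obtain z where "z \<in> V" "C = component_of V (E - {{a, b}}) z"
      unfolding is_component_iff by blast
    then show "C = component_of V (E - {{a, b}}) a \<or> C = component_of V (E - {{a, b}}) b"
      using cover component_of_eq by (metis UnE)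
  qed (use a_in_V b_in_V in \<open>auto simp: is_component_iff\<close>)
qed

lemma bridge_sides:
  assumes bridge: "\<not> (\<exists>C. is_cycle E C \<and> {a, b} \<in> C)"
    and cycle: "is_cycle E C" and unique: "\<forall>C'. is_cycle E C' \<longrightarrow> C' = C"
  obtains x c where "{x, c} = {a, b}"
    "acyclic_on (E - {{a, b}}) (component_of V (E - {{a, b}}) x)"
    "\<not> acyclic_on (E - {{a, b}}) (component_of V (E - {{a, b}}) c)"
proof -
  let ?E' = "E - {{a, b}}"
  let ?comp = "component_of V ?E'"
  obtain vs where vs: "3 \<le> length vs" "distinct vs" "C = cycle_edges vs" "C \<subseteq> E"
    using cycle unfolding is_cycle_def by blast
  have "C \<subseteq> ?E'" "vs \<noteq> []" using bridge cycle vs by auto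
  then have walk: "walk ?E' vs" using walk_if_cycle_edges_subset vs(3) by blast
  have vs_in_V: "set vs \<subseteq> V"
  proof
    fix y assume "y \<in> set vs"
    then obtain i where "i < length vs" "vs ! i = y" by (meson in_set_conv_nth)
    then show "y \<in> V" using cycle_edgesI[of i vs] vs(3,4) edge_vertices by blast
  qed
  then have "hd vs \<in> V" using hd_in_set[OF \<open>vs \<noteq> []\<close>] by blast
  then consider "reachable ?E' a (hd vs)" | "reachable ?E' b (hd vs)"
    using reachable_avoiding_edge by auto
  then obtain x c where cx: "{x, c} = {a, b}" "reachable ?E' c (hd vs)"
  proof cases
    case 1
    then show ?thesis using that[of b a] by (simp add: insert_commute)
  next
    case 2
    then show ?thesis using that[of a b] by simp
  qed
  have "set vs \<subseteq> ?comp c"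
    using vs_in_V reachable_walk_member[OF walk] reachable_trans[OF cx(2)]
    unfolding component_of_def by blast
  then have "\<not> acyclic_on ?E' (?comp c)" using not_acyclic_onI vs \<open>C \<subseteq> ?E'\<close> by blast
  moreover have "acyclic_on ?E' (?comp x)"
    unfolding acyclic_on_def
  proof
    assume "\<exists>Cy. is_cycle {e \<in> ?E'. e \<subseteq> ?comp x} Cy"
    then obtain Cy where Cy: "is_cycle {e \<in> ?E'. e \<subseteq> ?comp x} Cy" ..
    then have "Cy = C" using unique is_cycle_mono by blast
    then have "hd vs \<in> ?comp x"
      using Cy last_hd_in_cycle_edges[OF \<open>vs \<noteq> []\<close>] vs(3) unfolding is_cycle_def by blast
    then have "reachable ?E' x (hd vs)" unfolding component_of_def by blast
    then have "reachable ?E' c x" using reachable_trans[OF cx(2) reachable_sym] by blast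
    then show False
      using cx(1) bridge_not_reachable[OF bridge] reachable_sym[of ?E' b a]
      by (auto simp: doubleton_eq_iff)
  qed
  ultimately show ?thesis using that cx(1) by blast
qed

lemma mu_of_bridge:
  fixes lam :: "'a \<Rightarrow> real" and mu :: "'a set \<Rightarrow> real"
  assumes bridge: "\<not> (\<exists>C. is_cycle E C \<and> {a, b} \<in> C)"
    and cycle: "is_cycle E C" and unique: "\<forall>C'. is_cycle E C' \<longrightarrow> C' = C"
    and odd_cycles: "\<forall>C. is_cycle E C \<longrightarrow> odd (card C)"
    and sol: "\<forall>i\<in>V. (\<Sum>e\<in>{e \<in> E. i \<in> e}. mu e) = lam i"
  shows "\<exists>Vk. is_component V (E - {{a, b}}) Vk \<and> acyclic_on (E - {{a, b}}) Vk
     \<and> (\<forall>C. is_component V (E - {{a, b}}) C \<and> acyclic_on (E - {{a, b}}) C \<longrightarrow> C = Vk)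
     \<and> (\<exists>D. is_component V (E - {{a, b}}) D \<and> D \<noteq> Vk \<and> V = Vk \<union> D)
     \<and> mu {a, b} = (\<Sum>i\<in>Vk. (-1) ^ level i * lam i)"
proof -
  let ?E' = "E - {{a, b}}"
  let ?comp = "component_of V ?E'"
  obtain x c where xc: "{x, c} = {a, b}"
    and tree: "acyclic_on ?E' (?comp x)" and not_tree: "\<not> acyclic_on ?E' (?comp c)"
    using bridge_sides[OF bridge cycle unique] by blast
  have comps: "is_component V ?E' C' \<longleftrightarrow> C' = ?comp x \<or> C' = ?comp c" for C'
    using components_remove_edge(2) xc by (auto simp: doubleton_eq_iff)
  have cover: "V = ?comp x \<union> ?comp c"
    using components_remove_edge(1) xc by (auto simp: doubleton_eq_iff)
  have "x \<in> ?comp x" using xc a_in_V b_in_V component_of_self by (auto simp: doubleton_eq_iff)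
  moreover have "c \<notin> ?comp x"
  proof
    assume "c \<in> ?comp x"
    then have "?comp c = ?comp x" by (rule component_of_eq)
    then show False using tree not_tree by simp
  qed
  ultimately have x_side: "?comp x \<inter> {a, b} = {x}" using xc by blast
  have closed: "\<forall>y w. y \<in> ?comp x \<longrightarrow> {y, w} \<in> ?E' \<longrightarrow> w \<in> ?comp x"
  proof (intro allI impI)
    fix y w assume y: "y \<in> ?comp x" and yw: "{y, w} \<in> ?E'"
    then have "w \<in> V" using edge_vertices[of y w] by blast
    then show "w \<in> ?comp x" by (rule component_of_closed[OF y yw])
  qed
  have sol_x: "\<forall>i\<in>?comp x. (\<Sum>e\<in>{e \<in> E. i \<in> e}. mu e) = lam i"
    using sol component_of_subset[of V ?E' x] by blast
  have mu: "mu {a, b} = (\<Sum>i\<in>?comp x. (-1) ^ level i * lam i)"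
    using signed_sum_closed_region[OF component_of_subset closed odd_cycles tree sol_x] x_side by simp
  show ?thesis
  proof (rule exI[of _ "?comp x"], intro conjI allI impI)
    show "is_component V ?E' (?comp x)" using comps by blast
    show "C' = ?comp x" if "is_component V ?E' C' \<and> acyclic_on ?E' C'" for C'
      using that comps not_tree by blast
    have "?comp c \<noteq> ?comp x" using tree not_tree by metis
    then show "\<exists>D. is_component V ?E' D \<and> D \<noteq> ?comp x \<and> V = ?comp x \<union> D"
      using comps[of "?comp c"] cover by blast
  qed (fact tree, fact mu)
qed

end

theorem proposition4p1:
  fixes V :: "'a set" and E :: "'a set set"
    and lam :: "'a \<Rightarrow> real" and mu :: "'a set \<Rightarrow> real" and k :: "'a set"
  assumes bij: "bijective_graph V E"
    and lam_pos: "\<forall>i\<in>V. lam i > 0"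
    and sol: "\<forall>i\<in>V. (\<Sum>e\<in>{e \<in> E. i \<in> e}. mu e) = lam i"
    and k: "k \<in> E"
  shows "((\<not> (\<exists>C. is_cycle E C \<and> k \<in> C)) \<longrightarrow>
            (\<exists>Vk. is_component V (E - {k}) Vk \<and> acyclic_on (E - {k}) Vk
               \<and> (\<forall>C. is_component V (E - {k}) C \<and> acyclic_on (E - {k}) C \<longrightarrow> C = Vk)
               \<and> (\<exists>D. is_component V (E - {k}) D \<and> D \<noteq> Vk \<and> V = Vk \<union> D)
               \<and> mu k = (\<Sum>i\<in>Vk. (-1) ^ edge_dist E i k * lam i)))
       \<and> ((\<exists>C. is_cycle E C \<and> k \<in> C) \<longrightarrow>
            mu k = 1 / 2 * (\<Sum>i\<in>V. (-1) ^ edge_dist E i k * lam i))"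
proof -
  obtain C where cycle: "is_cycle E C" and "odd (card C)"
    and unique: "\<forall>C'. is_cycle E C' \<longrightarrow> C' = C"
    using bij unfolding bijective_graph_def by blast
  then have odd_cycles: "\<forall>C'. is_cycle E C' \<longrightarrow> odd (card C')" by blast
  have "simple_graph V E" using bij unfolding bijective_graph_def by blast
  then obtain a b where k_ab: "k = {a, b}" using k unfolding simple_graph_def by blast
  interpret connected_graph_edge V E a b
    using bij k k_ab by unfold_locales (auto simp: bijective_graph_def)
  have "acyclic_on (E - {{a, b}}) V" if "\<exists>C. is_cycle E C \<and> {a, b} \<in> C"
    using that unique unfolding acyclic_on_def is_cycle_def by blast
  then show ?thesis
    unfolding k_ab
    using mu_of_bridge[OF _ cycle unique odd_cycles sol] mu_of_cycle_edge[OF odd_cycles _ sol]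
    by blast
qed

end
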